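(* Let $S$ be a finite $0$-rectangular band whose non-zero $\mathscr{D}$-class $D=R\times C$ has $m$ rows and $n$ columns, and put $a=n/m$. Suppose that $S$ has a permutation matching. Then for any collection $T$ of $t$ rows of $D$ $(1\le t\le m)$, \[ |\{c\in C: c\cap E(T)\neq\emptyset\}|\ \ge\ ta, \] and for any collection $T$ of $t$ columns of $D$ $(1\le t\le n)$, \[ |\{r\in R: r\cap E(T)\neq\emptyset\}|\ \ge\ \frac{t}{a}. \]
   Context: A finite $0$-rectangular band with $m$ rows and $n$ columns is described as follows: $S=(R\times C)\cup\{0\}$ with $R=\{1,\dots,m\}$ (rows), $C=\{1,\dots,n\}$ (columns), and a set $E\subseteq R\times C$ meeting every row and every column; multiplication is $(i,j)(k,l)=(i,l)$ if $(k,j)\in E$ and $0$ otherwise, with $0$ a zero. Then $E$ is exactly the set of non-zero idempotents, $D=R\times C$ is the non-zero $\mathscr{D}$-class, a row is the set $\{i\}\times C$ and a column is $R\times\{j\}$. For a set $T$ of rows (resp. columns), $E(T)$ denotes the set of idempotents lying in the union of the members of $T$; a column $c$ (resp. row $r$) is regarded as a subset of $D$. For $x\in S$, $V(x)=\{y: xyx=x,\ yxy=y\}$; a permutation matching of $S$ is a bijection $\phi:S\to S$ with $\phi(x)\in V(x)$ for all $x$. *)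

theory Defs
  imports Complex_Main
begin

text \<open>A finite 0-rectangular band with rows {1..m}, columns {1..n} and idempotent set E.
  Elements are represented as 'nat \<times> nat option', where None is the zero and
  Some (i,j) is the element (i,j) of D = R \<times> C.\<close>

definition rows :: "nat \<Rightarrow> nat set" where "rows m = {1..m}"
definition cols :: "nat \<Rightarrow> nat set" where "cols n = {1..n}"

definition zrb_carrier :: "nat \<Rightarrow> nat \<Rightarrow> (nat \<times> nat) option set" where
  "zrb_carrier m n = insert None (Some ` (rows m \<times> cols n))"

definition zrb_mult :: "(nat \<times> nat) set \<Rightarrow> (nat \<times> nat) option \<Rightarrow> (nat \<times> nat) option \<Rightarrow> (nat \<times> nat) option" where
  "zrb_mult E x y = (case (x, y) of
      (Some (i, j), Some (k, l)) \<Rightarrow> (if (k, j) \<in> E then Some (i, l) else None)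
    | _ \<Rightarrow> None)"

definition zrb_valid :: "nat \<Rightarrow> nat \<Rightarrow> (nat \<times> nat) set \<Rightarrow> bool" where
  "zrb_valid m n E \<longleftrightarrow> E \<subseteq> rows m \<times> cols n
     \<and> (\<forall>i\<in>rows m. \<exists>j. (i, j) \<in> E) \<and> (\<forall>j\<in>cols n. \<exists>i. (i, j) \<in> E)"

definition zrb_inverses :: "nat \<Rightarrow> nat \<Rightarrow> (nat \<times> nat) set \<Rightarrow> (nat \<times> nat) option \<Rightarrow> (nat \<times> nat) option set" where
  "zrb_inverses m n E x = {y \<in> zrb_carrier m n.
      zrb_mult E (zrb_mult E x y) x = x \<and> zrb_mult E (zrb_mult E y x) y = y}"

definition permutation_matching :: "nat \<Rightarrow> nat \<Rightarrow> (nat \<times> nat) set \<Rightarrow> ((nat \<times> nat) option \<Rightarrow> (nat \<times> nat) option) \<Rightarrow> bool" where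
  "permutation_matching m n E \<phi> \<longleftrightarrow> bij_betw \<phi> (zrb_carrier m n) (zrb_carrier m n)
     \<and> (\<forall>x\<in>zrb_carrier m n. \<phi> x \<in> zrb_inverses m n E x)"

end

theory Submission
  imports Defs
begin

text \<open>The inverses of a non-zero element \<open>(i, j)\<close> are exactly the elements \<open>(k, l)\<close> with
  \<open>(k, j)\<close> and \<open>(i, l)\<close> idempotent. A permutation matching therefore injects \<open>T \<times> C\<close>, for a set
  \<open>T\<close> of rows, into \<open>R \<times> N\<close>, where \<open>N\<close> is the set of columns meeting \<open>E(T)\<close>; this gives
  \<open>t n \<le> m |N|\<close>, and dually for sets of columns.\<close>

definition inverse_positions :: "nat \<Rightarrow> nat \<Rightarrow> (nat \<times> nat) set \<Rightarrow> nat \<Rightarrow> nat \<Rightarrow> (nat \<times> nat) set" where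
  "inverse_positions m n E i j = {(k, l) \<in> rows m \<times> cols n. (k, j) \<in> E \<and> (i, l) \<in> E}"

lemma zrb_inverses_Some:
  "zrb_inverses m n E (Some (i, j)) = Some ` inverse_positions m n E i j"
proof (intro equalityI subsetI)
  fix y assume "y \<in> zrb_inverses m n E (Some (i, j))"
  then have "y \<in> zrb_carrier m n"
    and xyx: "zrb_mult E (zrb_mult E (Some (i, j)) y) (Some (i, j)) = Some (i, j)"
    by (auto simp: zrb_inverses_def)
  then obtain k l where "y = Some (k, l)" "k \<in> rows m" "l \<in> cols n"
    by (auto simp: zrb_carrier_def zrb_mult_def)
  with xyx show "y \<in> Some ` inverse_positions m n E i j"
    by (auto simp: zrb_mult_def inverse_positions_def split: if_splits)
next
  fix y assume "y \<in> Some ` inverse_positions m n E i j"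
  then show "y \<in> zrb_inverses m n E (Some (i, j))"
    by (auto simp: inverse_positions_def zrb_inverses_def zrb_carrier_def zrb_mult_def)
qed

lemma permutation_matching_obtains_injection:
  assumes "permutation_matching m n E \<phi>"
  obtains \<psi> where "inj_on \<psi> (rows m \<times> cols n)"
    and "\<And>i j. i \<in> rows m \<Longrightarrow> j \<in> cols n \<Longrightarrow> \<psi> (i, j) \<in> inverse_positions m n E i j"
proof
  let ?\<psi> = "\<lambda>p. the (\<phi> (Some p))"
  have Some_in_carrier: "Some p \<in> zrb_carrier m n" if "p \<in> rows m \<times> cols n" for p
    using that by (simp add: zrb_carrier_def)
  have \<phi>_Some: "\<phi> (Some (i, j)) = Some (?\<psi> (i, j)) \<and> ?\<psi> (i, j) \<in> inverse_positions m n E i j"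
    if "(i, j) \<in> rows m \<times> cols n" for i j
  proof -
    have "\<phi> (Some (i, j)) \<in> zrb_inverses m n E (Some (i, j))"
      using assms Some_in_carrier[OF that] by (simp add: permutation_matching_def)
    then show ?thesis by (auto simp: zrb_inverses_Some)
  qed
  then show "?\<psi> (i, j) \<in> inverse_positions m n E i j" if "i \<in> rows m" "j \<in> cols n" for i j
    using that by blast
  show "inj_on ?\<psi> (rows m \<times> cols n)"
  proof (rule inj_onI)
    fix p q assume p: "p \<in> rows m \<times> cols n" and q: "q \<in> rows m \<times> cols n" and "?\<psi> p = ?\<psi> q"
    then have "\<phi> (Some p) = \<phi> (Some q)"
      using \<phi>_Some[of "fst p" "snd p"] \<phi>_Some[of "fst q" "snd q"] by simp
    with assms Some_in_carrier[OF p] Some_in_carrier[OF q] show "p = q"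
      by (auto simp: permutation_matching_def bij_betw_def inj_on_def)
  qed
qed

lemma finite_rows [simp]: "finite (rows m)" and card_rows [simp]: "card (rows m) = m"
  by (simp_all add: rows_def)

lemma finite_cols [simp]: "finite (cols n)" and card_cols [simp]: "card (cols n) = n"
  by (simp_all add: cols_def)

lemma permutation_matching_row_bound:
  assumes "permutation_matching m n E \<phi>" and "T \<subseteq> rows m"
  shows "card T * n \<le> m * card {c \<in> cols n. \<exists>i\<in>T. (i, c) \<in> E}"
proof -
  let ?N = "{c \<in> cols n. \<exists>i\<in>T. (i, c) \<in> E}"
  obtain \<psi> where inj: "inj_on \<psi> (rows m \<times> cols n)"
    and \<psi>: "\<And>i j. i \<in> rows m \<Longrightarrow> j \<in> cols n \<Longrightarrow> \<psi> (i, j) \<in> inverse_positions m n E i j"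
    using permutation_matching_obtains_injection[OF assms(1)] by blast
  have "\<psi> (i, j) \<in> rows m \<times> ?N" if "i \<in> T" "j \<in> cols n" for i j
  proof -
    obtain k l where "\<psi> (i, j) = (k, l)"
      by fastforce
    then show ?thesis
      using \<psi>[of i j] that assms(2) by (auto simp: inverse_positions_def)
  qed
  then have "\<psi> ` (T \<times> cols n) \<subseteq> rows m \<times> ?N"
    by blast
  moreover have "inj_on \<psi> (T \<times> cols n)"
    using assms(2) by (intro inj_on_subset[OF inj] Sigma_mono) auto
  ultimately have "card (T \<times> cols n) \<le> card (rows m \<times> ?N)"
    by (intro card_inj_on_le) simp_all
  then show ?thesis by (simp add: card_cartesian_product)
qed

lemma permutation_matching_col_bound:
  assumes "permutation_matching m n E \<phi>" and "T \<subseteq> cols n"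
  shows "m * card T \<le> card {r \<in> rows m. \<exists>j\<in>T. (r, j) \<in> E} * n"
proof -
  let ?N = "{r \<in> rows m. \<exists>j\<in>T. (r, j) \<in> E}"
  obtain \<psi> where inj: "inj_on \<psi> (rows m \<times> cols n)"
    and \<psi>: "\<And>i j. i \<in> rows m \<Longrightarrow> j \<in> cols n \<Longrightarrow> \<psi> (i, j) \<in> inverse_positions m n E i j"
    using permutation_matching_obtains_injection[OF assms(1)] by blast
  have "\<psi> (i, j) \<in> ?N \<times> cols n" if "i \<in> rows m" "j \<in> T" for i j
  proof -
    obtain k l where "\<psi> (i, j) = (k, l)"
      by fastforce
    then show ?thesis
      using \<psi>[of i j] that assms(2) by (auto simp: inverse_positions_def)
  qed
  then have "\<psi> ` (rows m \<times> T) \<subseteq> ?N \<times> cols n"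
    by blast
  moreover have "inj_on \<psi> (rows m \<times> T)"
    using assms(2) by (intro inj_on_subset[OF inj] Sigma_mono) auto
  ultimately have "card (rows m \<times> T) \<le> card (?N \<times> cols n)"
    by (intro card_inj_on_le) simp_all
  then show ?thesis by (simp add: card_cartesian_product)
qed

theorem lemma2p2:
  fixes m n :: nat and E :: "(nat \<times> nat) set"
  assumes "0 < m" and "0 < n"
    and "zrb_valid m n E"
    and "\<exists>\<phi>. permutation_matching m n E \<phi>"
  shows "(\<forall>T. T \<subseteq> rows m \<and> T \<noteq> {} \<longrightarrow>
            real (card {c \<in> cols n. \<exists>i\<in>T. (i, c) \<in> E}) \<ge> real (card T) * (real n / real m))
       \<and> (\<forall>T. T \<subseteq> cols n \<and> T \<noteq> {} \<longrightarrow>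
            real (card {r \<in> rows m. \<exists>j\<in>T. (r, j) \<in> E}) \<ge> real (card T) / (real n / real m))"
proof -
  obtain \<phi> where pm: "permutation_matching m n E \<phi>"
    using assms(4) by blast
  show ?thesis
  proof (intro conjI allI impI; elim conjE)
    fix T assume "T \<subseteq> rows m"
    then have "card T * n \<le> m * card {c \<in> cols n. \<exists>i\<in>T. (i, c) \<in> E}"
      by (rule permutation_matching_row_bound[OF pm])
    then have "real (card T) * real n \<le> real m * real (card {c \<in> cols n. \<exists>i\<in>T. (i, c) \<in> E})"
      by (simp only: of_nat_mult [symmetric] of_nat_le_iff)
    then show "real (card {c \<in> cols n. \<exists>i\<in>T. (i, c) \<in> E}) \<ge> real (card T) * (real n / real m)"
      using assms(1) by (simp add: field_simps)
  next
    fix T assume "T \<subseteq> cols n"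
    then have "m * card T \<le> card {r \<in> rows m. \<exists>j\<in>T. (r, j) \<in> E} * n"
      by (rule permutation_matching_col_bound[OF pm])
    then have "real m * real (card T) \<le> real (card {r \<in> rows m. \<exists>j\<in>T. (r, j) \<in> E}) * real n"
      by (simp only: of_nat_mult [symmetric] of_nat_le_iff)
    then show "real (card {r \<in> rows m. \<exists>j\<in>T. (r, j) \<in> E}) \<ge> real (card T) / (real n / real m)"
      using assms(1,2) by (simp add: field_simps)
  qed
qed

end
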